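(* Let $\mathcal Y$ be a finite or countable label set and $\mathcal H\subseteq\mathcal Y^{\mathcal X}$ a hypothesis class, with the 0-1 loss in the realizable transductive setting. Then there exists a local unsupervised regularizer $\psi$ for $\mathcal H$ such that every learner $A$ induced by $\psi$ satisfies $\epsilon_{A,\mathcal H}(n)\le 2\,\epsilon_{\mathcal H}(n)$ for all $n\in\mathbb N$.
   Context: A local unsupervised regularizer is a function $\psi:\mathcal H\times\mathcal X^{<\omega}\times\mathcal X\to\mathbb R_{\ge0}$. For a labeled sample $S$, $S_{\mathcal X}$ is its sequence of unlabeled points and $L_S(h)$ the fraction of points of $S$ misclassified by $h$. A learner $A$ is induced by $\psi$ if for all samples $S$ and $x\in\mathcal X$, $A(S)(x)\in\{h(x):h\in\arg\min_{h\in\mathcal H}L_S(h)+\psi(h,S_{\mathcal X},x)\}$. Transductive error: for $S=(x_1,\dots,x_n)\in\mathcal X^n$, $h\in\mathcal H$, and $A(S_{-i},h)$ the output of $A$ on $(x_j,h(x_j))_{j\ne i}$, $L^{\mathrm{Trans}}_{S,h}(A)=\frac1n\sum_{i=1}^n\Pr[A(S_{-i},h)(x_i)\ne h(x_i)]$; $\epsilon_{A,\mathcal H}(n)=\sup_{S\in\mathcal X^n,h\in\mathcal H}L^{\mathrm{Trans}}_{S,h}(A)$; $\epsilon_{\mathcal H}(n)=\inf_A\epsilon_{A,\mathcal H}(n)$ over all (possibly randomized) learners. *)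

theory Defs
  imports "HOL-Probability.Probability"
begin

type_synonym ('x, 'y) learner = "('x \<times> 'y) list \<Rightarrow> 'x \<Rightarrow> 'y pmf"

definition emp_err :: "('x \<times> 'y) list \<Rightarrow> ('x \<Rightarrow> 'y) \<Rightarrow> real" where
  "emp_err S h = real (card {i. i < length S \<and> h (fst (S ! i)) \<noteq> snd (S ! i)}) / real (length S)"

definition local_regularizer ::
  "('x \<Rightarrow> 'y) set \<Rightarrow> (('x \<Rightarrow> 'y) \<Rightarrow> 'x list \<Rightarrow> 'x \<Rightarrow> real) \<Rightarrow> bool" where
  "local_regularizer H \<psi> \<longleftrightarrow> (\<forall>h\<in>H. \<forall>xs x. 0 \<le> \<psi> h xs x)"

definition reg_argmin ::
  "('x \<Rightarrow> 'y) set \<Rightarrow> (('x \<Rightarrow> 'y) \<Rightarrow> 'x list \<Rightarrow> 'x \<Rightarrow> real) \<Rightarrow> ('x \<times> 'y) list \<Rightarrow> 'x \<Rightarrow> ('x \<Rightarrow> 'y) set" where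
  "reg_argmin H \<psi> S x = {h \<in> H. \<forall>g\<in>H.
      emp_err S h + \<psi> h (map fst S) x \<le> emp_err S g + \<psi> g (map fst S) x}"

definition induced_by ::
  "('x \<Rightarrow> 'y) set \<Rightarrow> (('x \<Rightarrow> 'y) \<Rightarrow> 'x list \<Rightarrow> 'x \<Rightarrow> real) \<Rightarrow> ('x, 'y) learner \<Rightarrow> bool" where
  "induced_by H \<psi> A \<longleftrightarrow>
     (\<forall>S x. set_pmf (A S x) \<subseteq> {h x | h. h \<in> reg_argmin H \<psi> S x})"

definition loo_sample :: "'x list \<Rightarrow> ('x \<Rightarrow> 'y) \<Rightarrow> nat \<Rightarrow> ('x \<times> 'y) list" where
  "loo_sample xs h i = map (\<lambda>x. (x, h x)) (take i xs @ drop (Suc i) xs)"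

definition trans_err :: "('x, 'y) learner \<Rightarrow> 'x list \<Rightarrow> ('x \<Rightarrow> 'y) \<Rightarrow> real" where
  "trans_err A xs h = (1 / real (length xs)) *
     (\<Sum>i<length xs. measure_pmf.prob (A (loo_sample xs h i) (xs ! i)) {y. y \<noteq> h (xs ! i)})"

definition learner_eps :: "('x, 'y) learner \<Rightarrow> ('x \<Rightarrow> 'y) set \<Rightarrow> nat \<Rightarrow> ereal" where
  "learner_eps A H n = (SUP p \<in> {(xs, h). length xs = n \<and> h \<in> H}. ereal (trans_err A (fst p) (snd p)))"

definition class_eps :: "('x \<Rightarrow> 'y) set \<Rightarrow> nat \<Rightarrow> ereal" where
  "class_eps H n = (INF A. learner_eps A H n)"

end

theory Submission
  imports Defs
begin

text \<open>Fix, for every sample size \<open>n\<close>, a learner \<open>A\<^sub>n\<close> whose worst-case transductive error is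
so close to \<open>\<epsilon>\<^sub>H(n)\<close> that twice it lies below the next multiple of \<open>1/n\<close> above \<open>2 \<epsilon>\<^sub>H(n)\<close>.
The regularizer charges a hypothesis \<open>g\<close> one unit at the test point \<open>x\<close> unless \<open>g x\<close> is the
majority vote of \<open>A\<^sub>n\<close> on the sample labelled by \<open>g\<close>. The true hypothesis has objective 0,
so every minimiser is consistent with the sample and agrees with the majority vote at \<open>x\<close>;
hence an induced learner errs at most where the majority vote errs. A label with
probability at most \<open>1/2\<close> is wrong with probability at least \<open>1/2\<close>, so the majority vote
has at most twice the error of \<open>A\<^sub>n\<close>. Its error is a multiple of \<open>1/n\<close>, and the choice of
\<open>A\<^sub>n\<close> turns the resulting strict bound into \<open>2 \<epsilon>\<^sub>H(n)\<close>.\<close>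

text \<open>If no label has mass above \<open>1/2\<close>, \<open>SOME\<close> picks an arbitrary label; every label then
has mass at most \<open>1/2\<close> anyway.\<close>
definition majority_label :: "'y pmf \<Rightarrow> 'y" where
  "majority_label p = (SOME y. pmf p y > 1/2)"

definition majority_vote :: "('x, 'y) learner \<Rightarrow> ('x, 'y) learner" where
  "majority_vote A S x = return_pmf (majority_label (A S x))"

lemma prob_neq_eq_1_minus_pmf: "measure_pmf.prob p {y. y \<noteq> a} = 1 - pmf p a"
proof -
  have "{y. y \<noteq> a} = space (measure_pmf p) - {a}" by auto
  then show ?thesis
    using measure_pmf.prob_compl[of "{a}" p] by (simp add: measure_pmf_single)
qed

lemma pmf_le_half_if_not_majority_label:
  assumes "a \<noteq> majority_label p"
  shows "pmf p a \<le> 1/2"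
proof (cases "\<exists>y. pmf p y > 1/2")
  case True
  then have major: "pmf p (majority_label p) > 1/2"
    unfolding majority_label_def by (rule someI_ex)
  have "pmf p a + pmf p (majority_label p) = measure_pmf.prob p {a, majority_label p}"
    using assms by (simp add: measure_measure_pmf_finite)
  also have "\<dots> \<le> 1" by simp
  finally show ?thesis using major by linarith
qed (simp add: not_less)

lemma not_majority_label_le_twice_prob_neq:
  "of_bool (a \<noteq> majority_label p) \<le> 2 * measure_pmf.prob p {y. y \<noteq> a}"
  using pmf_le_half_if_not_majority_label[of a p] pmf_le_1[of p a]
  by (auto simp: prob_neq_eq_1_minus_pmf)

lemma prob_majority_vote_neq:
  "measure_pmf.prob (majority_vote A S x) {y. y \<noteq> a} = of_bool (a \<noteq> majority_label (A S x))"
  by (auto simp: majority_vote_def)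

lemma trans_err_majority_vote_le: "trans_err (majority_vote A) xs h \<le> 2 * trans_err A xs h"
proof -
  have "(\<Sum>i<length xs. measure_pmf.prob (majority_vote A (loo_sample xs h i) (xs ! i)) {y. y \<noteq> h (xs ! i)})
      \<le> 2 * (\<Sum>i<length xs. measure_pmf.prob (A (loo_sample xs h i) (xs ! i)) {y. y \<noteq> h (xs ! i)})"
    unfolding prob_majority_vote_neq sum_distrib_left
    by (intro sum_mono not_majority_label_le_twice_prob_neq)
  then show ?thesis
    by (simp add: trans_err_def divide_right_mono)
qed

lemma trans_err_majority_vote_in_Nats:
  "real (length xs) * trans_err (majority_vote A) xs h \<in> \<nat>"
proof (cases "xs = []")
  case False
  then have counting: "real (length xs) * trans_err (majority_vote A) xs h
      = real (\<Sum>i<length xs. of_bool (h (xs ! i) \<noteq> majority_label (A (loo_sample xs h i) (xs ! i))))"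
    by (simp add: trans_err_def prob_majority_vote_neq)
  show ?thesis
    unfolding counting by (rule of_nat_in_Nats)
qed (simp add: trans_err_def)

lemma trans_err_nonneg: "0 \<le> trans_err A xs h"
  by (simp add: trans_err_def sum_nonneg)

lemma trans_err_le_learner_eps:
  "length xs = n \<Longrightarrow> h \<in> H \<Longrightarrow> ereal (trans_err A xs h) \<le> learner_eps A H n"
  unfolding learner_eps_def by (rule SUP_upper2[of "(xs, h)"]) auto

lemma class_eps_nonneg:
  assumes "h \<in> H"
  shows "0 \<le> class_eps H n"
  unfolding class_eps_def
proof (rule INF_greatest)
  fix A :: "('a, 'b) learner"
  obtain xs :: "'a list" where "length xs = n"
    using Ex_list_of_length by blast
  then have "ereal (trans_err A xs h) \<le> learner_eps A H n"
    using assms by (rule trans_err_le_learner_eps)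
  then show "0 \<le> learner_eps A H n"
    using trans_err_nonneg[of A xs h] by (metis ereal_less_eq(5) order_trans)
qed

definition next_grid_point :: "real \<Rightarrow> nat \<Rightarrow> real" where
  "next_grid_point r n = (\<lfloor>r * n\<rfloor> + 1) / n"

lemma less_next_grid_point:
  assumes "n > 0"
  shows "r < next_grid_point r n"
proof -
  have "r * n < \<lfloor>r * n\<rfloor> + 1" by linarith
  with assms show ?thesis by (simp add: next_grid_point_def field_simps)
qed

lemma le_if_less_next_grid_point:
  assumes "n > 0" and "real n * t \<in> \<nat>" and "t < next_grid_point r n"
  shows "t \<le> r"
proof -
  from assms(2) obtain k :: nat where k: "real n * t = k"
    by (auto elim: Nats_cases)
  from assms(1,3) have "real n * t < \<lfloor>r * n\<rfloor> + 1"
    by (simp add: next_grid_point_def field_simps)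
  then have "int k \<le> \<lfloor>r * n\<rfloor>" unfolding k by linarith
  then have "real n * t \<le> r * n" unfolding k by linarith
  with assms(1) show ?thesis by (simp add: mult.commute)
qed

text \<open>The learner \<open>A\<^sub>n\<close> above. The infimum \<open>\<epsilon>\<^sub>H(n)\<close> need not be attained, so we only ask
for twice its error to stay below the next grid point.\<close>
definition near_optimal_learner :: "('x \<Rightarrow> 'y) set \<Rightarrow> nat \<Rightarrow> ('x, 'y) learner" where
  "near_optimal_learner H n =
     (SOME A. learner_eps A H n < ereal (next_grid_point (2 * real_of_ereal (class_eps H n)) n / 2))"

lemma trans_err_near_optimal_learner:
  assumes "class_eps H n = ereal r" and "n > 0" and "length xs = n" and "h \<in> H"
  shows "2 * trans_err (near_optimal_learner H n) xs h < next_grid_point (2 * r) n"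
proof -
  define g where "g = next_grid_point (2 * r) n / 2"
  have "class_eps H n < ereal g"
    using less_next_grid_point[OF assms(2), of "2 * r"] assms(1) by (simp add: g_def)
  then have "\<exists>A. learner_eps A H n < ereal g"
    unfolding class_eps_def by (simp add: INF_less_iff)
  then have "learner_eps (near_optimal_learner H n) H n < ereal g"
    unfolding near_optimal_learner_def assms(1) real_of_ereal.simps(1) g_def by (rule someI_ex)
  moreover have "ereal (trans_err (near_optimal_learner H n) xs h) \<le> learner_eps (near_optimal_learner H n) H n"
    using assms(3,4) by (rule trans_err_le_learner_eps)
  ultimately have "ereal (trans_err (near_optimal_learner H n) xs h) < ereal g"
    by (meson le_less_trans)
  then show ?thesis by (simp add: g_def)
qed

lemma emp_err_nonneg: "0 \<le> emp_err S h"
  by (simp add: emp_err_def)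

lemma emp_err_eq_0_iff: "emp_err S g = 0 \<longleftrightarrow> (\<forall>(x, y) \<in> set S. g x = y)"
proof -
  have "emp_err S g = 0 \<longleftrightarrow> (\<forall>i < length S. g (fst (S ! i)) = snd (S ! i))"
    by (auto simp: emp_err_def)
  also have "\<dots> \<longleftrightarrow> (\<forall>(x, y) \<in> set S. g x = y)"
    by (simp add: all_set_conv_all_nth case_prod_beta)
  finally show ?thesis .
qed

text \<open>\<open>A n\<close> is a learner for transductive sets of size \<open>n\<close>; it sees \<open>n - 1\<close> labelled points.\<close>
definition majority_regularizer ::
  "(nat \<Rightarrow> ('x, 'y) learner) \<Rightarrow> ('x \<Rightarrow> 'y) \<Rightarrow> 'x list \<Rightarrow> 'x \<Rightarrow> real" where
  "majority_regularizer A g xs x =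
     of_bool (g x \<noteq> majority_label (A (Suc (length xs)) (map (\<lambda>z. (z, g z)) xs) x))"

lemma local_regularizer_majority_regularizer: "local_regularizer H (majority_regularizer A)"
  by (simp add: local_regularizer_def majority_regularizer_def)

lemma induced_by_majority_regularizer_eq_return_pmf:
  assumes induced: "induced_by H (majority_regularizer A) B" and "h \<in> H"
    and majority: "h x = majority_label (A (Suc (length xs)) (map (\<lambda>z. (z, h z)) xs) x)"
  shows "B (map (\<lambda>z. (z, h z)) xs) x = return_pmf (h x)"
proof -
  define S where "S = map (\<lambda>z. (z, h z)) xs"
  have fst_S: "map fst S = xs"
    by (simp add: S_def comp_def)
  have objective_h: "emp_err S h + majority_regularizer A h xs x = 0"
    using majority by (simp add: S_def emp_err_eq_0_iff majority_regularizer_def)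
  have "g x = h x" if "g \<in> reg_argmin H (majority_regularizer A) S x" for g
  proof -
    have "emp_err S g + majority_regularizer A g xs x \<le> emp_err S h + majority_regularizer A h xs x"
      using that \<open>h \<in> H\<close> unfolding reg_argmin_def fst_S by blast
    then have "emp_err S g + majority_regularizer A g xs x \<le> 0"
      unfolding objective_h .
    moreover have "0 \<le> emp_err S g" and "0 \<le> majority_regularizer A g xs x"
      by (simp_all add: emp_err_nonneg majority_regularizer_def)
    ultimately have "emp_err S g = 0" and regularizer_g: "majority_regularizer A g xs x = 0"
      by linarith+
    then have "map (\<lambda>z. (z, g z)) xs = S"
      by (simp add: S_def emp_err_eq_0_iff)
    with regularizer_g majority show "g x = h x"
      by (simp add: majority_regularizer_def S_def)
  qed
  with induced have "set_pmf (B S x) \<subseteq> {h x}"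
    unfolding induced_by_def by blast
  then show ?thesis
    unfolding S_def set_pmf_subset_singleton .
qed

lemma prob_induced_by_majority_regularizer_neq_le:
  assumes "induced_by H (majority_regularizer A) B" and "h \<in> H" and "i < length xs"
  shows "measure_pmf.prob (B (loo_sample xs h i) (xs ! i)) {y. y \<noteq> h (xs ! i)}
    \<le> measure_pmf.prob (majority_vote (A (length xs)) (loo_sample xs h i) (xs ! i)) {y. y \<noteq> h (xs ! i)}"
proof (cases "h (xs ! i) = majority_label (A (length xs) (loo_sample xs h i) (xs ! i))")
  case True
  define ys where "ys = take i xs @ drop (Suc i) xs"
  have loo: "loo_sample xs h i = map (\<lambda>z. (z, h z)) ys"
    by (simp add: loo_sample_def ys_def)
  have "length xs = Suc (length ys)"
    using assms(3) by (simp add: ys_def)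
  with True have "B (loo_sample xs h i) (xs ! i) = return_pmf (h (xs ! i))"
    unfolding loo by (intro induced_by_majority_regularizer_eq_return_pmf[OF assms(1,2)]) simp
  then show ?thesis by simp
qed (simp add: prob_majority_vote_neq)

lemma trans_err_induced_by_majority_regularizer_le:
  assumes "induced_by H (majority_regularizer A) B" and "h \<in> H"
  shows "trans_err B xs h \<le> trans_err (majority_vote (A (length xs))) xs h"
  using prob_induced_by_majority_regularizer_neq_le[OF assms]
  by (auto simp: trans_err_def intro!: divide_right_mono sum_mono)

lemma trans_err_induced_le_twice_class_eps:
  assumes induced: "induced_by H (majority_regularizer (near_optimal_learner H)) B" and "h \<in> H"
  shows "ereal (trans_err B xs h) \<le> 2 * class_eps H (length xs)"
proof -
  define n where "n = length xs"
  have "0 \<le> class_eps H n"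
    using \<open>h \<in> H\<close> by (rule class_eps_nonneg)
  then consider r where "class_eps H n = ereal r" and "0 \<le> r" | "class_eps H n = \<infinity>"
    by (cases "class_eps H n") auto
  then show ?thesis
  proof cases
    case (1 r)
    have "trans_err B xs h \<le> 2 * r"
    proof (cases "n = 0")
      case True
      then show ?thesis using \<open>0 \<le> r\<close> by (simp add: n_def trans_err_def)
    next
      case False
      define M where "M = majority_vote (near_optimal_learner H n)"
      have "trans_err B xs h \<le> trans_err M xs h"
        unfolding M_def n_def using induced \<open>h \<in> H\<close>
        by (rule trans_err_induced_by_majority_regularizer_le)
      also have "\<dots> \<le> 2 * r"
      proof (rule le_if_less_next_grid_point)
        show "n > 0" using False by simp
        show "real n * trans_err M xs h \<in> \<nat>"
          unfolding M_def n_def by (rule trans_err_majority_vote_in_Nats)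
        have "trans_err M xs h \<le> 2 * trans_err (near_optimal_learner H n) xs h"
          unfolding M_def by (rule trans_err_majority_vote_le)
        also have "\<dots> < next_grid_point (2 * r) n"
          using 1 False \<open>h \<in> H\<close> by (simp add: n_def trans_err_near_optimal_learner)
        finally show "trans_err M xs h < next_grid_point (2 * r) n" .
      qed
      finally show ?thesis .
    qed
    then show ?thesis using 1 by (simp add: n_def)
  qed (simp add: n_def)
qed

theorem theorem4p1:
  fixes H :: "('x \<Rightarrow> 'y::countable) set"
  shows "\<exists>\<psi>. local_regularizer H \<psi> \<and>
           (\<forall>A. induced_by H \<psi> A \<longrightarrow> (\<forall>n. learner_eps A H n \<le> 2 * class_eps H n))"
proof (intro exI[of _ "majority_regularizer (near_optimal_learner H)"] conjI allI impI)
  show "local_regularizer H (majority_regularizer (near_optimal_learner H))"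
    by (rule local_regularizer_majority_regularizer)
next
  fix B n
  assume "induced_by H (majority_regularizer (near_optimal_learner H)) B"
  then show "learner_eps B H n \<le> 2 * class_eps H n"
    unfolding learner_eps_def
    by (auto intro!: SUP_least dest: trans_err_induced_le_twice_class_eps)
qed

end
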